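(* Let $A$ be an $n\times n$ Hermitian matrix ($n\ge2$) with eigenvalues $\lambda_1\ge\dots\ge\lambda_n$, and for $k=1,\dots,n$ let $\mu_{k,1}\ge\dots\ge\mu_{k,n-1}$ be the eigenvalues of $A_k$. Then for all $1\le\ell\le r\le n-1$, $$(n-\ell)\lambda_\ell+(n-1)\sum_{j=\ell+1}^r\lambda_j+r\lambda_n\le\sum_{k=1}^n\sum_{j=\ell}^r\mu_{k,j}\le(n-\ell)\lambda_1+(n-1)\sum_{j=\ell+1}^r\lambda_j+r\lambda_{r+1}.$$
   Context: For an $n\times n$ matrix $A$ and $k\in\{1,\dots,n\}$, $A_k$ denotes the $(n-1)\times(n-1)$ principal submatrix obtained by deleting the $k$-th row and $k$-th column of $A$. Empty sums are zero. *)

theory Defs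
  imports "Jordan_Normal_Form.Jordan_Normal_Form" "HOL-Computational_Algebra.Polynomial"
begin

definition hermitian :: "complex mat \<Rightarrow> bool" where
  "hermitian A \<longleftrightarrow> square_mat A \<and>
     (\<forall>i < dim_row A. \<forall>j < dim_row A. A $$ (i, j) = cnj (A $$ (j, i)))"

text \<open>For Hermitian matrices all eigenvalues
  are real, so taking real parts loses nothing.\<close>
definition eigvals_desc :: "complex mat \<Rightarrow> real list" where
  "eigvals_desc A = rev (sorted_list_of_multiset (image_mset Re (proots (char_poly A))))"

text \<open>1-indexed: eig A j is the j-th largest eigenvalue, j = 1..dim.\<close>
definition eig :: "complex mat \<Rightarrow> nat \<Rightarrow> real" where
  "eig A j = eigvals_desc A ! (j - 1)"

text \<open>Principal submatrix A_k (1-indexed k): delete k-th row and column.\<close>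
definition principal_sub :: "complex mat \<Rightarrow> nat \<Rightarrow> complex mat" where
  "principal_sub A k = mat_delete A (k - 1) (k - 1)"

end

(*
  Let u_1, ..., u_n be an orthonormal eigenbasis of A, and view eigenvectors of A_k as
  vectors of C^n with vanishing k-th coordinate.  For any vectors x_{k,q} (k = 1..n,
  q = 1..t) that are orthonormal for each fixed k and have vanishing k-th coordinate, the
  sum of the Rayleigh quotients <x_{k,q}, A x_{k,q}> equals sum_i lambda_i d_i, where
  0 <= d_i <= n - 1 by Bessel's inequality in the coordinates other than k, and
  sum_i d_i = n t by Parseval.  A bathtub argument bounds such sums by the extreme
  admissible weight patterns.

  Taking for x_{k,q} the top t eigenvectors of A_k bounds S(t) = sum_k (mu_{k,1} + ... +
  mu_{k,t}) from above; for t = n - 1 it forces d_i = n - 1, i.e. S(n - 1) = (n - 1) tr A.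
  Taking x_{k,q} in the span of t + 1 consecutive u_i (one linear condition leaves room
  for t orthonormal vectors) and applying Ky Fan's maximum or minimum principle to A_k
  bounds S(t) from below.  The claim follows by writing the middle sum as S(r) - S(l - 1).
*)
theory Submission
  imports Defs "Jordan_Normal_Form.Schur_Decomposition"
begin

section \<open>Coordinate inner products and unitary eigenbases\<close>

definition cinner :: "nat \<Rightarrow> (nat \<Rightarrow> complex) \<Rightarrow> (nat \<Rightarrow> complex) \<Rightarrow> complex" where
  "cinner m x y = (\<Sum>i<m. cnj (x i) * y i)"

definition cnorm2 :: "nat \<Rightarrow> (nat \<Rightarrow> complex) \<Rightarrow> real" where
  "cnorm2 m x = (\<Sum>i<m. (cmod (x i))\<^sup>2)"

definition quad_form :: "nat \<Rightarrow> complex mat \<Rightarrow> (nat \<Rightarrow> complex) \<Rightarrow> complex" where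
  "quad_form m M x = (\<Sum>i<m. \<Sum>i'<m. cnj (x i) * M $$ (i, i') * x i')"

definition orthonormal_family :: "nat \<Rightarrow> nat \<Rightarrow> (nat \<Rightarrow> nat \<Rightarrow> complex) \<Rightarrow> bool" where
  "orthonormal_family m s X \<longleftrightarrow>
     (\<forall>q<s. \<forall>q'<s. cinner m (X q) (X q') = (if q = q' then 1 else 0))"

definition unitary_eigenbasis ::
    "nat \<Rightarrow> complex mat \<Rightarrow> (nat \<Rightarrow> nat \<Rightarrow> complex) \<Rightarrow> (nat \<Rightarrow> real) \<Rightarrow> bool" where
  "unitary_eigenbasis m M U \<nu> \<longleftrightarrow>
     orthonormal_family m m (\<lambda>j i. U i j) \<and>
     (\<forall>i<m. \<forall>i'<m. (\<Sum>j<m. U i j * cnj (U i' j)) = (if i = i' then 1 else 0)) \<and>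
     (\<forall>i<m. \<forall>j<m. (\<Sum>i'<m. M $$ (i, i') * U i' j) = of_real (\<nu> j) * U i j)"

lemma orthonormal_familyD:
  "orthonormal_family m s X \<Longrightarrow> q < s \<Longrightarrow> q' < s \<Longrightarrow>
    cinner m (X q) (X q') = (if q = q' then 1 else 0)"
  unfolding orthonormal_family_def by blast

lemma orthonormal_family_mono:
  "orthonormal_family m s X \<Longrightarrow> s' \<le> s \<Longrightarrow> orthonormal_family m s' X"
  unfolding orthonormal_family_def by simp

lemma unitary_eigenbasis_orthonormal_cols:
  "unitary_eigenbasis m M U \<nu> \<Longrightarrow> orthonormal_family m m (\<lambda>j i. U i j)"
  unfolding unitary_eigenbasis_def by blast

lemma unitary_eigenbasis_rows:
  "unitary_eigenbasis m M U \<nu> \<Longrightarrow> i < m \<Longrightarrow> i' < m \<Longrightarrow>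
    (\<Sum>j<m. U i j * cnj (U i' j)) = (if i = i' then 1 else 0)"
  unfolding unitary_eigenbasis_def by blast

lemma unitary_eigenbasis_eigen:
  "unitary_eigenbasis m M U \<nu> \<Longrightarrow> i < m \<Longrightarrow> j < m \<Longrightarrow>
    (\<Sum>i'<m. M $$ (i, i') * U i' j) = of_real (\<nu> j) * U i j"
  unfolding unitary_eigenbasis_def by blast

lemma cnj_cinner: "cnj (cinner m x y) = cinner m y x"
  unfolding cinner_def by (simp add: mult.commute)

lemma cmod_cinner_commute: "cmod (cinner m x y) = cmod (cinner m y x)"
  by (metis cnj_cinner complex_mod_cnj)

lemma cinner_self: "cinner m x x = of_real (cnorm2 m x)"
  unfolding cnorm2_def cinner_def of_real_sum complex_norm_square by (simp add: mult.commute)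

lemma cnorm2_nonneg: "0 \<le> cnorm2 m x"
  unfolding cnorm2_def by (intro sum_nonneg) auto

lemma cinner_sum_right: "cinner m y (\<lambda>i. \<Sum>q<s. a q * X q i) = (\<Sum>q<s. a q * cinner m y (X q))"
  unfolding cinner_def sum_distrib_left by (subst sum.swap) (simp add: mult_ac)

lemma cinner_sum_left:
  "cinner m (\<lambda>i. \<Sum>q<s. a q * X q i) y = (\<Sum>q<s. cnj (a q) * cinner m (X q) y)"
  unfolding cinner_def sum_distrib_left cnj_sum sum_distrib_right
  by (subst sum.swap) (simp add: mult_ac)

lemma cinner_diff_self:
  "cinner m (\<lambda>i. x i - y i) (\<lambda>i. x i - y i) = cinner m x x - cinner m x y - cinner m y x + cinner m y y"
  unfolding cinner_def by (simp add: algebra_simps sum.distrib sum_subtractf)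

lemma orthonormal_family_cnorm2:
  assumes "orthonormal_family m s X" and "q < s"
  shows "cnorm2 m (X q) = 1"
  using orthonormal_familyD[OF assms(1,2,2)] cinner_self[of m "X q"] by simp

lemma cinner_orthonormal_combination:
  assumes "orthonormal_family m s X" and "q < s"
  shows "cinner m (X q) (\<lambda>i. \<Sum>q'<s. a q' * X q' i) = a q"
proof -
  have "cinner m (X q) (\<lambda>i. \<Sum>q'<s. a q' * X q' i) = (\<Sum>q'<s. if q' = q then a q else 0)"
    unfolding cinner_sum_right using orthonormal_familyD[OF assms(1)] assms(2)
    by (intro sum.cong) auto
  then show ?thesis using assms(2) by simp
qed

lemma bessel_inequality:
  assumes "orthonormal_family m s X"
  shows "(\<Sum>q<s. (cmod (cinner m (X q) z))\<^sup>2) \<le> cnorm2 m z"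
proof -
  define c where "c q = cinner m (X q) z" for q
  define w where "w i = (\<Sum>q<s. c q * X q i)" for i
  define S where "S = (\<Sum>q<s. (cmod (c q))\<^sup>2)"
  have S: "of_real S = (\<Sum>q<s. cnj (c q) * c q)"
    unfolding S_def of_real_sum complex_norm_square by (simp add: mult.commute)
  have "cinner m (X q) w = c q" if "q < s" for q
    unfolding w_def cinner_orthonormal_combination[OF assms that] ..
  then have ww: "cinner m w w = of_real S"
    unfolding S w_def[abs_def] cinner_sum_left by simp
  have zw: "cinner m z w = of_real S"
    unfolding S w_def[abs_def] cinner_sum_right c_def by (simp add: cnj_cinner mult.commute)
  have wz: "cinner m w z = of_real S"
    unfolding S w_def[abs_def] cinner_sum_left c_def ..
  have "of_real (cnorm2 m (\<lambda>i. z i - w i)) = (of_real (cnorm2 m z - S) :: complex)"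
    unfolding cinner_self[symmetric] cinner_diff_self zw wz ww by (simp add: cinner_self)
  then show ?thesis
    using cnorm2_nonneg[of m "\<lambda>i. z i - w i"] unfolding S_def c_def of_real_eq_iff by simp
qed

lemma unitary_eigenbasis_expansion:
  assumes "unitary_eigenbasis m M U \<nu>" and "i < m"
  shows "(\<Sum>j<m. U i j * cinner m (\<lambda>i. U i j) x) = x i"
proof -
  have "(\<Sum>j<m. U i j * cinner m (\<lambda>i. U i j) x) = (\<Sum>i'<m. (\<Sum>j<m. U i j * cnj (U i' j)) * x i')"
    unfolding cinner_def sum_distrib_left sum_distrib_right
    by (subst sum.swap) (simp add: mult_ac)
  also have "\<dots> = (\<Sum>i'<m. if i = i' then x i' else 0)"
    using unitary_eigenbasis_rows[OF assms(1,2)] by (intro sum.cong) auto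
  also have "\<dots> = x i"
    using assms(2) by simp
  finally show ?thesis .
qed

lemma cnj_cinner_expand: "cnj (cinner m x y) = (\<Sum>i<m. cnj (y i) * x i)"
  unfolding cinner_def by (simp add: mult.commute)

lemma parseval:
  assumes "unitary_eigenbasis m M U \<nu>"
  shows "(\<Sum>j<m. (cmod (cinner m (\<lambda>i. U i j) x))\<^sup>2) = cnorm2 m x"
proof -
  let ?c = "\<lambda>j. cinner m (\<lambda>i. U i j) x"
  have "of_real (\<Sum>j<m. (cmod (?c j))\<^sup>2) = (\<Sum>j<m. ?c j * cnj (?c j))"
    by (simp only: of_real_sum complex_norm_square)
  also have "\<dots> = (\<Sum>j<m. \<Sum>i<m. cnj (x i) * (U i j * ?c j))"
    unfolding cnj_cinner_expand sum_distrib_left by (intro sum.cong refl) (simp only: mult_ac)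
  also have "\<dots> = (\<Sum>i<m. cnj (x i) * (\<Sum>j<m. U i j * ?c j))"
    unfolding sum_distrib_left by (rule sum.swap)
  also have "\<dots> = (\<Sum>i<m. cnj (x i) * x i)"
    using unitary_eigenbasis_expansion[OF assms] by (intro sum.cong refl) simp
  also have "\<dots> = of_real (cnorm2 m x)"
    unfolding cinner_self[symmetric] cinner_def ..
  finally show ?thesis by (simp only: of_real_eq_iff)
qed

lemma quad_form_eigen_expansion:
  assumes "unitary_eigenbasis m M U \<nu>"
  shows "Re (quad_form m M x) = (\<Sum>j<m. \<nu> j * (cmod (cinner m (\<lambda>i. U i j) x))\<^sup>2)"
proof -
  let ?c = "\<lambda>j. cinner m (\<lambda>i. U i j) x"
  have Mx: "(\<Sum>i'<m. M $$ (i, i') * x i') = (\<Sum>j<m. ?c j * of_real (\<nu> j) * U i j)"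
    if "i < m" for i
  proof -
    have "(\<Sum>i'<m. M $$ (i, i') * x i') = (\<Sum>i'<m. M $$ (i, i') * (\<Sum>j<m. U i' j * ?c j))"
      using unitary_eigenbasis_expansion[OF assms] by simp
    also have "\<dots> = (\<Sum>j<m. ?c j * (\<Sum>i'<m. M $$ (i, i') * U i' j))"
      unfolding sum_distrib_left by (subst sum.swap) (simp only: mult_ac)
    also have "\<dots> = (\<Sum>j<m. ?c j * of_real (\<nu> j) * U i j)"
      using unitary_eigenbasis_eigen[OF assms that] by (simp add: mult.assoc)
    finally show ?thesis .
  qed
  have "quad_form m M x = (\<Sum>i<m. cnj (x i) * (\<Sum>i'<m. M $$ (i, i') * x i'))"
    unfolding quad_form_def sum_distrib_left by (simp only: mult.assoc)
  also have "\<dots> = (\<Sum>i<m. cnj (x i) * (\<Sum>j<m. ?c j * of_real (\<nu> j) * U i j))"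
    using Mx by (intro sum.cong refl) simp
  also have "\<dots> = (\<Sum>j<m. ?c j * of_real (\<nu> j) * (\<Sum>i<m. cnj (x i) * U i j))"
    unfolding sum_distrib_left by (subst sum.swap) (simp only: mult_ac)
  also have "\<dots> = (\<Sum>j<m. of_real (\<nu> j) * (?c j * cnj (?c j)))"
    unfolding cnj_cinner_expand by (intro sum.cong refl) (simp only: mult_ac)
  also have "\<dots> = of_real (\<Sum>j<m. \<nu> j * (cmod (?c j))\<^sup>2)"
    by (simp only: of_real_sum of_real_mult complex_norm_square)
  finally show ?thesis by simp
qed

lemma quad_form_eigenvector:
  assumes U: "unitary_eigenbasis m M U \<nu>" and j: "j < m"
  shows "Re (quad_form m M (\<lambda>i. U i j)) = \<nu> j"
proof -
  have "Re (quad_form m M (\<lambda>i. U i j)) = (\<Sum>j'<m. if j' = j then \<nu> j else 0)"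
    unfolding quad_form_eigen_expansion[OF U]
    using orthonormal_familyD[OF unitary_eigenbasis_orthonormal_cols[OF U]] j
    by (intro sum.cong) auto
  then show ?thesis using j by simp
qed

section \<open>Unitary diagonalization of Hermitian matrices\<close>

definition vec_normalize :: "complex vec \<Rightarrow> complex vec" where
  "vec_normalize v = complex_of_real (1 / sqrt (Re (v \<bullet>c v))) \<cdot>\<^sub>v v"

lemma vec_normalize_carrier [simp]: "v \<in> carrier_vec n \<Longrightarrow> vec_normalize v \<in> carrier_vec n"
  unfolding vec_normalize_def by simp

lemma sprodc_smult:
  assumes "v \<in> carrier_vec n" and "w \<in> carrier_vec n"
  shows "(a \<cdot>\<^sub>v v) \<bullet>c (b \<cdot>\<^sub>v w) = a * cnj b * (v \<bullet>c w)"
  using assms unfolding scalar_prod_def by (simp add: sum_distrib_left mult_ac)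

lemma vec_normalize_sprodc:
  assumes "v \<in> carrier_vec n" and "w \<in> carrier_vec n"
  shows "vec_normalize v \<bullet>c vec_normalize w =
    complex_of_real (1 / sqrt (Re (v \<bullet>c v)) * (1 / sqrt (Re (w \<bullet>c w)))) * (v \<bullet>c w)"
  unfolding vec_normalize_def sprodc_smult[OF assms] by simp

lemma vec_normalize_unit:
  assumes v: "v \<in> carrier_vec n" and v0: "v \<noteq> 0\<^sub>v n"
  shows "vec_normalize v \<bullet>c vec_normalize v = 1"
proof -
  define r where "r = Re (v \<bullet>c v)"
  have "v \<bullet>c v > 0"
    using conjugate_square_greater_0_vec[OF v] v0 by simp
  then have vv: "v \<bullet>c v = complex_of_real r" and r: "r > 0"
    unfolding r_def by (auto simp: complex_eq_iff less_complex_def)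
  have "vec_normalize v \<bullet>c vec_normalize v = complex_of_real (1 / sqrt r * (1 / sqrt r) * r)"
    unfolding vec_normalize_sprodc[OF v v] r_def[symmetric] vv by (simp only: of_real_mult Re_complex_of_real)
  also have "1 / sqrt r * (1 / sqrt r) * r = 1"
    using r by (simp add: field_simps)
  finally show ?thesis by simp
qed

lemma orthonormal_basis_completion:
  assumes v: "v \<in> carrier_vec n" and v0: "v \<noteq> 0\<^sub>v n"
  obtains ws where "set ws \<subseteq> carrier_vec n" and "length ws = n" and "hd ws = vec_normalize v"
    and "\<And>i j. i < n \<Longrightarrow> j < n \<Longrightarrow> ws ! i \<bullet>c ws ! j = (if i = j then 1 else 0)"
proof
  interpret cof_vec_space n "TYPE(complex)" .
  define b where "b = basis_completion v"
  define ws0 where "ws0 = gram_schmidt n b"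
  from basis_completion[OF v v0, folded b_def]
  have b: "set b \<subseteq> carrier_vec n" "distinct b" "\<not> lin_dep (set b)" "length b = n" "hd b = v"
    by auto
  have "n \<noteq> 0"
  proof
    assume "n = 0"
    then have "v = 0\<^sub>v n" using v by (intro eq_vecI) auto
    with v0 show False ..
  qed
  with b obtain vs where bv: "b = v # vs" by (cases b) auto
  from gram_schmidt_result[OF b(1-3) refl, folded ws0_def]
  have ws0: "set ws0 \<subseteq> carrier_vec n" "corthogonal ws0" "length ws0 = n"
    by (auto simp: b(4))
  have hd0: "hd ws0 = v"
    using gram_schmidt_hd[OF v, of vs] unfolding ws0_def bv .
  have ws0i: "ws0 ! i \<in> carrier_vec n" "ws0 ! i \<noteq> 0\<^sub>v n" if "i < n" for i
  proof -
    show c: "ws0 ! i \<in> carrier_vec n" using ws0 that by auto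
    have "ws0 ! i \<bullet>c ws0 ! i \<noteq> 0" using corthogonalD[OF ws0(2), of i i] ws0(3) that by auto
    then show "ws0 ! i \<noteq> 0\<^sub>v n" using c by auto
  qed
  define ws where "ws = map vec_normalize ws0"
  show "set ws \<subseteq> carrier_vec n" "length ws = n"
    using ws0 unfolding ws_def by auto
  show "hd ws = vec_normalize v"
    using hd0 ws0(3) \<open>n \<noteq> 0\<close> unfolding ws_def by (cases ws0) auto
  show "ws ! i \<bullet>c ws ! j = (if i = j then 1 else 0)" if "i < n" "j < n" for i j
  proof (cases "i = j")
    case True
    then show ?thesis unfolding ws_def using that ws0(3) vec_normalize_unit[OF ws0i[OF that(1)]] by simp
  next
    case False
    then have "ws0 ! i \<bullet>c ws0 ! j = 0" using corthogonalD[OF ws0(2), of i j] ws0(3) that by auto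
    then show ?thesis
      unfolding ws_def using that ws0(3) False vec_normalize_sprodc[OF ws0i(1)[OF that(1)] ws0i(1)[OF that(2)]]
      by simp
  qed
qed

lemma index_mat_adjoint [simp]:
  "dim_row (mat_adjoint M) = dim_col M" "dim_col (mat_adjoint M) = dim_row M"
  "i < dim_col M \<Longrightarrow> j < dim_row M \<Longrightarrow> mat_adjoint M $$ (i, j) = cnj (M $$ (j, i))"
  unfolding mat_adjoint_def by (auto simp: mat_of_rows_def)

lemma mat_adjoint_carrier [simp]: "M \<in> carrier_mat r c \<Longrightarrow> mat_adjoint M \<in> carrier_mat c r"
  unfolding carrier_mat_def mat_adjoint_def by (simp add: mat_of_rows_def)

lemma mat_adjoint_mult:
  assumes "A \<in> carrier_mat r n" and "B \<in> carrier_mat n c"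
  shows "mat_adjoint (A * B) = mat_adjoint B * mat_adjoint (A :: complex mat)"
  by (rule eq_matI) (use assms in \<open>auto simp: scalar_prod_def cnj_sum mult.commute intro!: sum.cong\<close>)

lemma mat_adjoint_adjoint [simp]: "mat_adjoint (mat_adjoint (M :: complex mat)) = M"
  by (rule eq_matI) auto

lemma mat_adjoint_one [simp]: "mat_adjoint (1\<^sub>m n) = (1\<^sub>m n :: complex mat)"
  by (rule eq_matI) auto

lemma mat_adjoint_four_block_diag:
  assumes "P \<in> carrier_mat m m"
  shows "mat_adjoint (four_block_mat (1\<^sub>m 1) (0\<^sub>m 1 m) (0\<^sub>m m 1) P) =
    four_block_mat (1\<^sub>m 1) (0\<^sub>m 1 m) (0\<^sub>m m 1) (mat_adjoint (P :: complex mat))"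
  by (rule eq_matI) (use assms in auto)

lemma unitary_eigenvector_deflation:
  fixes A :: "complex mat"
  assumes A: "A \<in> carrier_mat n n" and e: "eigenvalue A e"
  obtains W where "W \<in> carrier_mat n n"
    and "similar_mat_wit (mat_adjoint W * A * W) A (mat_adjoint W) W"
    and "col (mat_adjoint W * A * W) 0 = vec n (\<lambda>i. if i = 0 then e else 0)"
proof -
  obtain v0 where "eigenvector A v0 e" using e unfolding eigenvalue_def by blast
  then have v0: "v0 \<in> carrier_vec n" "v0 \<noteq> 0\<^sub>v n" "A *\<^sub>v v0 = e \<cdot>\<^sub>v v0"
    using A unfolding eigenvector_def by auto
  then have n: "n \<noteq> 0" by auto
  define v where "v = vec_normalize v0"
  have v: "v \<in> carrier_vec n" "v \<bullet>c v = 1" "A *\<^sub>v v = e \<cdot>\<^sub>v v"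
    using v0 A vec_normalize_unit[OF v0(1,2)]
    by (auto simp: v_def vec_normalize_def mult_mat_vec smult_smult_assoc mult.commute)
  then have "v \<noteq> 0\<^sub>v n" by auto
  obtain ws where ws: "set ws \<subseteq> carrier_vec n" "length ws = n" "hd ws = v"
    and orth: "\<And>i j. i < n \<Longrightarrow> j < n \<Longrightarrow> ws ! i \<bullet>c ws ! j = (if i = j then 1 else 0)"
    using orthonormal_basis_completion[OF v0(1,2)] unfolding v_def by metis
  have cws: "corthogonal ws"
    using orth ws(2) by (intro corthogonalI) simp
  define W where "W = mat_of_cols n ws"
  have W: "W \<in> carrier_mat n n" unfolding W_def using mat_of_cols_carrier(1)[of n ws] ws(2) by simp
  have colW: "col W i = ws ! i" if "i < n" for i
    unfolding W_def using ws that by (intro col_mat_of_cols) auto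
  have inv: "corthogonal_inv W = mat_adjoint W"
  proof -
    have "map vec_inv (cols W) = map conjugate (cols W)"
      using W orth colW by (intro map_cong refl) (auto simp: vec_inv_def cols_def)
    then show ?thesis unfolding corthogonal_inv_def mat_adjoint_def by (rule arg_cong)
  qed
  have "inverts_mat (mat_adjoint W) W"
    using corthogonal_inv_result[OF orthogonal_mat_of_cols[OF ws(1) cws ws(2)]]
    unfolding W_def[symmetric] inv .
  then have WW: "mat_adjoint W * W = 1\<^sub>m n" "W * mat_adjoint W = 1\<^sub>m n"
    using mat_mult_left_right_inverse[of "mat_adjoint W" n W] W
    unfolding inverts_mat_def by auto
  show thesis
  proof
    show "W \<in> carrier_mat n n" by (rule W)
    show "similar_mat_wit (mat_adjoint W * A * W) A (mat_adjoint W) W"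
      using WW W A by (intro similar_mat_witI[of _ _ n]) auto
    show "col (mat_adjoint W * A * W) 0 = vec n (\<lambda>i. if i = 0 then e else 0)"
      using corthogonal_col_ev_0[OF A v(1) \<open>v \<noteq> 0\<^sub>v n\<close> v(3) n ws(3) ws(1) cws ws(2)]
      unfolding W_def[symmetric] inv .
  qed
qed

lemma unitary_deflation_blocks:
  fixes A :: "complex mat"
  assumes A: "A \<in> carrier_mat n n" and cp: "char_poly A = [:- e, 1:] * (\<Prod>e\<leftarrow>es. [:- e, 1:])"
  obtains W A2 A3 where "W \<in> carrier_mat n n"
    and "similar_mat_wit A (four_block_mat (mat 1 1 (\<lambda>_. e)) A2 (0\<^sub>m (n - 1) 1) A3) W (mat_adjoint W)"
    and "A2 \<in> carrier_mat 1 (n - 1)" and "A3 \<in> carrier_mat (n - 1) (n - 1)"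
    and "char_poly A3 = (\<Prod>e\<leftarrow>es. [:- e, 1:])" and "n \<noteq> 0"
proof -
  have "degree (char_poly A) = Suc (degree (\<Prod>e\<leftarrow>es. [:- e, 1:]))"
    unfolding cp by (subst degree_mult_eq) (auto simp: monic_prod_list)
  then have n: "n \<noteq> 0" using degree_monic_char_poly[OF A] by auto
  have "eigenvalue A e"
    unfolding eigenvalue_root_char_poly[OF A] cp by simp
  then obtain W where W: "W \<in> carrier_mat n n"
    and simW: "similar_mat_wit (mat_adjoint W * A * W) A (mat_adjoint W) W"
    and col0: "col (mat_adjoint W * A * W) 0 = vec n (\<lambda>i. if i = 0 then e else 0)"
    using unitary_eigenvector_deflation[OF A] by blast
  define A' where "A' = mat_adjoint W * A * W"
  have A': "A' \<in> carrier_mat n n"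
    unfolding A'_def using A W by (metis mat_adjoint_carrier mult_carrier_mat)
  note col0 = col0[folded A'_def]
  obtain A1 A2 A0 A3 where split: "split_block A' 1 1 = (A1, A2, A0, A3)"
    by (cases "split_block A' 1 1") auto
  from A' n have "dim_row A' = 1 + (n - 1)" "dim_col A' = 1 + (n - 1)" by auto
  from split_block[OF split this] have A2: "A2 \<in> carrier_mat 1 (n - 1)"
    and A3: "A3 \<in> carrier_mat (n - 1) (n - 1)" and A'_block: "A' = four_block_mat A1 A2 A0 A3"
    by auto
  have A1: "A1 = mat 1 1 (\<lambda>_. e)"
    using split[unfolded split_block_def Let_def] arg_cong[OF col0, of "\<lambda>v. v $ 0"] A' n
    by (auto simp: col_def)
  have "A' $$ (Suc i, 0) = 0" if "i < n - 1" for i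
    using arg_cong[OF col0, of "\<lambda>v. v $ Suc i"] A' that by auto
  then have A0: "A0 = 0\<^sub>m (n - 1) 1"
    using split[unfolded split_block_def Let_def] A' by auto
  have sim: "similar_mat_wit A A' W (mat_adjoint W)"
    unfolding A'_def by (rule similar_mat_wit_sym[OF simW])
  then have "char_poly A = char_poly A'"
    unfolding similar_mat_def by (intro char_poly_similar) (auto simp: similar_mat_def)
  also have "\<dots> = [:- e, 1:] * char_poly A3"
    unfolding A'_block A0 A1 using A2 A3
    by (subst char_poly_four_block_zeros_col) (auto simp: char_poly_defs det_def sign_def)
  finally have "char_poly A3 = (\<Prod>e\<leftarrow>es. [:- e, 1:])"
    unfolding cp by (subst (asm) mult_cancel_left) simp
  with that W sim A2 A3 n show thesis
    unfolding A'_block A0 A1 by blast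
qed

lemma unitary_schur_decomposition:
  fixes A :: "complex mat"
  assumes "A \<in> carrier_mat n n" and "char_poly A = (\<Prod>e\<leftarrow>es. [:- e, 1:])"
  shows "\<exists>B P. similar_mat_wit A B P (mat_adjoint P) \<and> upper_triangular B \<and> diag_mat B = es"
  using assms
proof (induction es arbitrary: n A)
  case Nil
  then have "n = 0" using degree_monic_char_poly[of A n] by auto
  with Nil have "similar_mat_wit A A (1\<^sub>m n) (mat_adjoint (1\<^sub>m n))" "upper_triangular A"
    "diag_mat A = []"
    using similar_mat_wit_refl[of A n] by (auto simp: diag_mat_def)
  then show ?case by blast
next
  case (Cons e es n A)
  let ?E = "mat 1 1 (\<lambda>_. e) :: complex mat"
  obtain W A2 A3 where W: "W \<in> carrier_mat n n"
    and simW: "similar_mat_wit A (four_block_mat ?E A2 (0\<^sub>m (n - 1) 1) A3) W (mat_adjoint W)"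
    and A2: "A2 \<in> carrier_mat 1 (n - 1)" and A3: "A3 \<in> carrier_mat (n - 1) (n - 1)"
    and cp3: "char_poly A3 = (\<Prod>e\<leftarrow>es. [:- e, 1:])" and n: "n \<noteq> 0"
    using unitary_deflation_blocks[of A n e es] Cons.prems by auto
  from Cons.IH[OF A3 cp3] obtain B P where
    simB: "similar_mat_wit A3 B P (mat_adjoint P)" and ut: "upper_triangular B"
    and diag: "diag_mat B = es" by blast
  note simB' = similar_mat_witD2[OF A3 simB]
  have B: "B \<in> carrier_mat (n - 1) (n - 1)" and P: "P \<in> carrier_mat (n - 1) (n - 1)"
    and PP: "P * mat_adjoint P = 1\<^sub>m (n - 1)"
    by (fact simB'(5), fact simB'(6), fact simB'(1))
  let ?P = "four_block_mat (1\<^sub>m 1) (0\<^sub>m 1 (n - 1)) (0\<^sub>m (n - 1) 1) P"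
  define C where "C = four_block_mat ?E (A2 * P) (0\<^sub>m (n - 1) 1) B"
  have A2_conj: "A2 = 1\<^sub>m 1 * (A2 * P) * mat_adjoint P"
    using A2 P PP by (simp add: assoc_mult_mat[of _ 1 "n - 1" _ "n - 1" _ "n - 1"])
  have "similar_mat_wit (four_block_mat ?E A2 (0\<^sub>m (n - 1) 1) A3) C ?P (mat_adjoint ?P)"
    unfolding C_def mat_adjoint_four_block_diag[OF P]
    by (rule similar_mat_wit_four_block[OF similar_mat_wit_refl simB A2_conj])
      (use A2 A3 P in auto)
  moreover have "mat_adjoint (W * ?P) = mat_adjoint ?P * mat_adjoint W"
    using P n by (intro mat_adjoint_mult[OF W]) auto
  ultimately have "similar_mat_wit A C (W * ?P) (mat_adjoint (W * ?P))"
    using similar_mat_wit_trans[OF simW] by simp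
  moreover have "upper_triangular C"
    unfolding C_def by (intro upper_triangular_four_block[OF _ B _ ut]) auto
  moreover have "diag_mat C = e # es"
  proof -
    have "diag_mat C = diag_mat ?E @ diag_mat B"
      unfolding C_def by (rule diag_four_block_mat[OF _ B, of _ 1]) simp
    moreover have "diag_mat ?E = [e]"
      by (simp add: diag_mat_def)
    ultimately show ?thesis using diag by simp
  qed
  ultimately show ?case by blast
qed

lemma hermitian_entry:
  assumes "hermitian A" and "A \<in> carrier_mat n n" and "i < n" and "j < n"
  shows "A $$ (i, j) = cnj (A $$ (j, i))"
proof -
  have "\<forall>i<dim_row A. \<forall>j<dim_row A. A $$ (i, j) = cnj (A $$ (j, i))"
    using assms(1) unfolding hermitian_def by blast
  moreover have "dim_row A = n" using assms(2) by simp
  ultimately show ?thesis using assms(3,4) by blast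
qed

lemma hermitianI:
  assumes "A \<in> carrier_mat n n" and "\<And>i j. i < n \<Longrightarrow> j < n \<Longrightarrow> A $$ (i, j) = cnj (A $$ (j, i))"
  shows "hermitian A"
  unfolding hermitian_def
proof (intro conjI allI impI)
  show "square_mat A" using assms(1) by simp
  fix i j assume "i < dim_row A" "j < dim_row A"
  with assms(1) show "A $$ (i, j) = cnj (A $$ (j, i))" by (intro assms(2)) auto
qed

lemma hermitian_iff_mat_adjoint:
  assumes "A \<in> carrier_mat n n"
  shows "hermitian A \<longleftrightarrow> mat_adjoint A = A"
proof
  assume h: "hermitian A"
  show "mat_adjoint A = A"
  proof (rule eq_matI)
    fix i j assume "i < dim_row A" "j < dim_col A"
    then show "mat_adjoint A $$ (i, j) = A $$ (i, j)"
      using assms by (simp add: hermitian_entry[OF h assms, of i j])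
  qed (use assms in auto)
next
  assume adj: "mat_adjoint A = A"
  show "hermitian A"
  proof (rule hermitianI[OF assms])
    fix i j assume "i < n" "j < n"
    then show "A $$ (i, j) = cnj (A $$ (j, i))"
      using arg_cong[OF adj, of "\<lambda>M. M $$ (i, j)"] assms by simp
  qed
qed

lemma unitary_similar_hermitian:
  assumes A: "A \<in> carrier_mat n n" and h: "hermitian A"
    and sim: "similar_mat_wit A B P (mat_adjoint P)"
  shows "hermitian B" and "A * P = P * B"
proof -
  note sim = similar_mat_witD2[OF A sim]
  have B: "B \<in> carrier_mat n n" and P: "P \<in> carrier_mat n n"
    and PP: "mat_adjoint P * P = 1\<^sub>m n" and A_eq: "A = P * B * mat_adjoint P"
    by (fact sim(5), fact sim(6), fact sim(2), fact sim(3))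
  show AP: "A * P = P * B"
    using A_eq P B PP by (simp add: assoc_mult_mat[of _ n n _ n _ n])
  have "mat_adjoint P * A * P = mat_adjoint P * (A * P)"
    using A P by (intro assoc_mult_mat) auto
  also have "\<dots> = (mat_adjoint P * P) * B"
    unfolding AP using P B by (intro assoc_mult_mat[symmetric]) auto
  finally have B_eq: "B = mat_adjoint P * A * P"
    using PP B by simp
  have "mat_adjoint B = mat_adjoint P * mat_adjoint A * P"
    unfolding B_eq using P A
    by (simp add: mat_adjoint_mult[of _ n n _ n] assoc_mult_mat[of _ n n _ n _ n])
  then have "mat_adjoint B = B"
    unfolding B_eq using hermitian_iff_mat_adjoint[OF A] h by simp
  then show "hermitian B" using hermitian_iff_mat_adjoint[OF B] by simp
qed

lemma hermitian_upper_triangular_diagonal: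
  assumes h: "hermitian B" and B: "B \<in> carrier_mat n n" and ut: "upper_triangular B"
  shows "\<And>i j. i < n \<Longrightarrow> j < n \<Longrightarrow> i \<noteq> j \<Longrightarrow> B $$ (i, j) = 0"
    and "\<And>j. j < n \<Longrightarrow> complex_of_real (Re (B $$ (j, j))) = B $$ (j, j)"
proof -
  fix i j assume ij: "i < n" "j < n" "i \<noteq> j"
  then have "B $$ (i, j) = 0 \<or> B $$ (j, i) = 0"
    using ut B unfolding upper_triangular_def by (cases "j < i") auto
  then show "B $$ (i, j) = 0" using hermitian_entry[OF h B ij(1,2)] by auto
next
  fix j assume "j < n"
  then have "cnj (B $$ (j, j)) = B $$ (j, j)"
    using hermitian_entry[OF h B] by (metis)
  then show "complex_of_real (Re (B $$ (j, j))) = B $$ (j, j)"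
    by (simp add: Reals_cnj_iff[symmetric])
qed

lemma unitary_eigenbasis_of_diagonalization:
  assumes A: "A \<in> carrier_mat n n" and P: "P \<in> carrier_mat n n" and B: "B \<in> carrier_mat n n"
    and PP: "P * mat_adjoint P = 1\<^sub>m n" "mat_adjoint P * P = 1\<^sub>m n" and AP: "A * P = P * B"
    and diag: "\<And>i j. i < n \<Longrightarrow> j < n \<Longrightarrow> B $$ (i, j) = (if i = j then complex_of_real (\<nu> j) else 0)"
  shows "unitary_eigenbasis n A (\<lambda>i j. P $$ (i, j)) \<nu>"
  unfolding unitary_eigenbasis_def orthonormal_family_def cinner_def
proof (intro conjI allI impI)
  fix j j' assume "j < n" "j' < n"
  then show "(\<Sum>i<n. cnj (P $$ (i, j)) * P $$ (i, j')) = (if j = j' then 1 else 0)"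
    using arg_cong[OF PP(2), of "\<lambda>M. M $$ (j, j')"] P
    by (simp add: scalar_prod_def lessThan_atLeast0)
next
  fix i i' assume "i < n" "i' < n"
  then show "(\<Sum>j<n. P $$ (i, j) * cnj (P $$ (i', j))) = (if i = i' then 1 else 0)"
    using arg_cong[OF PP(1), of "\<lambda>M. M $$ (i, i')"] P
    by (simp add: scalar_prod_def lessThan_atLeast0)
next
  fix i j assume ij: "i < n" "j < n"
  have "(\<Sum>i'<n. A $$ (i, i') * P $$ (i', j)) = (P * B) $$ (i, j)"
    using arg_cong[OF AP, of "\<lambda>M. M $$ (i, j)"] ij A P
    by (simp add: scalar_prod_def lessThan_atLeast0)
  also have "\<dots> = (\<Sum>k<n. P $$ (i, k) * (if k = j then complex_of_real (\<nu> j) else 0))"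
    using ij P B diag by (simp add: scalar_prod_def lessThan_atLeast0)
  finally show "(\<Sum>i'<n. A $$ (i, i') * P $$ (i', j)) = complex_of_real (\<nu> j) * P $$ (i, j)"
    using ij(2) by (simp add: mult.commute if_distrib cong: if_cong)
qed

lemma hermitian_unitary_diagonalization:
  fixes A :: "complex mat"
  assumes A: "A \<in> carrier_mat n n" and h: "hermitian A"
    and cp: "char_poly A = (\<Prod>e\<leftarrow>es. [:- e, 1:])"
  shows "\<forall>e\<in>set es. complex_of_real (Re e) = e"
    and "\<exists>U. unitary_eigenbasis n A U (\<lambda>j. Re (es ! j))"
proof -
  obtain B P where sim: "similar_mat_wit A B P (mat_adjoint P)" and ut: "upper_triangular B"
    and diag: "diag_mat B = es"
    using unitary_schur_decomposition[OF A cp] by blast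
  note sim' = similar_mat_witD2[OF A sim]
  have B: "B \<in> carrier_mat n n" and P: "P \<in> carrier_mat n n"
    by (fact sim'(5), fact sim'(6))
  have es: "length es = n" "\<And>j. j < n \<Longrightarrow> es ! j = B $$ (j, j)"
    using diag B unfolding diag_mat_def by auto
  note B_diag = hermitian_upper_triangular_diagonal[OF unitary_similar_hermitian(1)[OF A h sim] B ut]
  show "\<forall>e\<in>set es. complex_of_real (Re e) = e"
    using es B_diag(2) by (auto simp: in_set_conv_nth)
  have "unitary_eigenbasis n A (\<lambda>i j. P $$ (i, j)) (\<lambda>j. Re (es ! j))"
    using A P B sim'(1,2) unitary_similar_hermitian(2)[OF A h sim] B_diag es(2)
    by (intro unitary_eigenbasis_of_diagonalization) auto
  then show "\<exists>U. unitary_eigenbasis n A U (\<lambda>j. Re (es ! j))" by blast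
qed

lemma proots_prod_linear_factors: "proots (\<Prod>a\<leftarrow>as. [:- a, 1:]) = mset (as :: complex list)"
proof (induction as)
  case (Cons a as)
  have "(\<Prod>a\<leftarrow>as. [:- a, 1:]) \<noteq> 0" by (auto simp: prod_list_zero_iff)
  then have "proots ([:- a, 1:] * (\<Prod>a\<leftarrow>as. [:- a, 1:])) =
      proots [:- a, 1:] + proots (\<Prod>a\<leftarrow>as. [:- a, 1:])"
    by (intro proots_mult) auto
  also have "proots [:- a, 1:] = {#a#}"
    using proots_linear_factor[of "-a"] by simp
  finally show ?case using Cons.IH by simp
qed simp

lemma hermitian_eigvals_desc:
  assumes A: "A \<in> carrier_mat n n" and h: "hermitian A"
  shows "length (eigvals_desc A) = n"
    and "char_poly A = (\<Prod>a\<leftarrow>map complex_of_real (eigvals_desc A). [:- a, 1:])"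
proof -
  obtain as where cp: "char_poly A = (\<Prod>a\<leftarrow>as. [:- a, 1:])" and len: "length as = n"
    using char_poly_factorized[OF A] by blast
  have real: "map (\<lambda>a. complex_of_real (Re a)) as = as"
    using hermitian_unitary_diagonalization(1)[OF A h cp] by (simp add: map_idI)
  have mset_eig: "mset (eigvals_desc A) = image_mset Re (mset as)"
    unfolding eigvals_desc_def cp proots_prod_linear_factors by simp
  then show "length (eigvals_desc A) = n"
    using len by (metis size_mset size_image_mset)
  have "image_mset complex_of_real (mset (eigvals_desc A)) = mset as"
    using mset_eig arg_cong[OF real, of mset] by (simp add: multiset.map_comp o_def)
  then show "char_poly A = (\<Prod>a\<leftarrow>map complex_of_real (eigvals_desc A). [:- a, 1:])"
    unfolding cp prod_mset_prod_list[symmetric] mset_map by simp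
qed

lemma eigvals_desc_antimono:
  assumes "j \<le> j'" and "j' < length (eigvals_desc A)"
  shows "eigvals_desc A ! j' \<le> eigvals_desc A ! j"
proof -
  define S where "S = sorted_list_of_multiset (image_mset Re (proots (char_poly A)))"
  have "eigvals_desc A = rev S" and "sorted S"
    unfolding eigvals_desc_def S_def by simp_all
  with assms show ?thesis
    by (simp add: rev_nth sorted_nth_mono)
qed

lemma unitary_eigenbasis_cong:
  assumes "\<And>j. j < m \<Longrightarrow> \<nu> j = \<nu>' j"
  shows "unitary_eigenbasis m M U \<nu> \<longleftrightarrow> unitary_eigenbasis m M U \<nu>'"
  unfolding unitary_eigenbasis_def using assms by simp

lemma hermitian_eigenbasis:
  assumes A: "A \<in> carrier_mat n n" and h: "hermitian A"
  shows "\<exists>U. unitary_eigenbasis n A U (\<lambda>j. eig A (Suc j))"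
proof -
  obtain U where U: "unitary_eigenbasis n A U (\<lambda>j. Re (map complex_of_real (eigvals_desc A) ! j))"
    using hermitian_unitary_diagonalization(2)[OF A h hermitian_eigvals_desc(2)[OF A h]] by blast
  have "unitary_eigenbasis n A U (\<lambda>j. Re (map complex_of_real (eigvals_desc A) ! j)) \<longleftrightarrow>
      unitary_eigenbasis n A U (\<lambda>j. eig A (Suc j))"
    using hermitian_eigvals_desc(1)[OF A h] by (intro unitary_eigenbasis_cong) (simp add: eig_def)
  with U show ?thesis by blast
qed

lemma hermitian_eig_antimono:
  assumes "A \<in> carrier_mat n n" and "hermitian A" and "j \<le> j'" and "j' < n"
  shows "eig A (Suc j') \<le> eig A (Suc j)"
  using eigvals_desc_antimono[of j j' A] hermitian_eigvals_desc(1)[OF assms(1,2)] assms(3,4)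
  unfolding eig_def by simp

section \<open>Ky Fan's inequalities\<close>

text \<open>The sign conditions are products so that an index carrying no weight (or full weight)
  imposes no condition on \<open>lam\<close>.\<close>
lemma bathtub_inequality:
  fixes lam c :: "nat \<Rightarrow> real"
  assumes fin: "finite I" and JI: "J \<subseteq> I"
    and inside: "\<And>i. i \<in> J \<Longrightarrow> (lam i - p) * (C - c i) \<ge> 0"
    and outside: "\<And>i. i \<in> I - J \<Longrightarrow> (p - lam i) * c i \<ge> 0"
    and total: "sum c I = C * real (card J) + rho"
  shows "(\<Sum>i\<in>I. lam i * c i) \<le> C * sum lam J + rho * p"
proof -
  have split: "sum f I = sum f J + sum f (I - J)" for f :: "nat \<Rightarrow> real"
    using sum.subset_diff[OF JI fin, of f] by linarith
  have "0 \<le> (\<Sum>i\<in>J. (lam i - p) * (C - c i)) + (\<Sum>i\<in>I - J. (p - lam i) * c i)"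
    using inside outside by (intro add_nonneg_nonneg sum_nonneg) auto
  also have "\<dots> = C * sum lam J + p * sum c I - p * C * real (card J) - (\<Sum>i\<in>I. lam i * c i)"
    unfolding split[of c] split[of "\<lambda>i. lam i * c i"]
    by (simp add: algebra_simps sum_subtractf sum.distrib sum_distrib_left)
  finally show ?thesis
    unfolding total by (simp add: algebra_simps)
qed

definition spectral_weight ::
    "nat \<Rightarrow> (nat \<Rightarrow> nat \<Rightarrow> complex) \<Rightarrow> nat \<Rightarrow> (nat \<Rightarrow> nat \<Rightarrow> complex) \<Rightarrow> nat \<Rightarrow> real" where
  "spectral_weight m U s X j = (\<Sum>q<s. (cmod (cinner m (\<lambda>i. U i j) (X q)))\<^sup>2)"

lemma spectral_weight_nonneg: "0 \<le> spectral_weight m U s X j"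
  unfolding spectral_weight_def by (intro sum_nonneg) simp

lemma sum_quad_form_eq_spectral_weights:
  assumes "unitary_eigenbasis m M U \<nu>"
  shows "(\<Sum>q<s. Re (quad_form m M (X q))) = (\<Sum>j<m. \<nu> j * spectral_weight m U s X j)"
  unfolding quad_form_eigen_expansion[OF assms] spectral_weight_def sum_distrib_left
  by (rule sum.swap)

lemma sum_spectral_weights:
  assumes "unitary_eigenbasis m M U \<nu>" and "orthonormal_family m s X"
  shows "(\<Sum>j<m. spectral_weight m U s X j) = real s"
proof -
  have "(\<Sum>j<m. spectral_weight m U s X j) = (\<Sum>q<s. cnorm2 m (X q))"
    unfolding spectral_weight_def parseval[OF assms(1), symmetric] by (rule sum.swap)
  also have "\<dots> = real s"
    using orthonormal_family_cnorm2[OF assms(2)] by simp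
  finally show ?thesis .
qed

lemma spectral_weight_le_coordinate_deleted:
  assumes U: "unitary_eigenbasis m M U \<nu>" and X: "orthonormal_family m s X"
    and j: "j < m" and k: "k < m" and Xk: "\<And>q. q < s \<Longrightarrow> X q k = 0"
  shows "spectral_weight m U s X j \<le> 1 - (cmod (U k j))\<^sup>2"
proof -
  define z where "z = (\<lambda>i. U i j)(k := 0)"
  have "cinner m (X q) z = cinner m (X q) (\<lambda>i. U i j)" if "q < s" for q
    unfolding cinner_def z_def using Xk[OF that] by (intro sum.cong) auto
  then have "spectral_weight m U s X j = (\<Sum>q<s. (cmod (cinner m (X q) z))\<^sup>2)"
    unfolding spectral_weight_def by (simp add: cmod_cinner_commute)
  also have "\<dots> \<le> cnorm2 m z"
    by (rule bessel_inequality[OF X])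
  also have "cnorm2 m z = cnorm2 m (\<lambda>i. U i j) - (cmod (U k j))\<^sup>2"
    unfolding cnorm2_def z_def using k by (simp add: sum.remove[of "{..<m}" k])
  also have "cnorm2 m (\<lambda>i. U i j) = 1"
    using orthonormal_family_cnorm2[OF unitary_eigenbasis_orthonormal_cols[OF U] j] .
  finally show ?thesis .
qed

lemma spectral_weight_le_one:
  assumes U: "unitary_eigenbasis m M U \<nu>" and X: "orthonormal_family m s X" and j: "j < m"
  shows "spectral_weight m U s X j \<le> 1"
proof -
  have "spectral_weight m U s X j = (\<Sum>q<s. (cmod (cinner m (X q) (\<lambda>i. U i j)))\<^sup>2)"
    unfolding spectral_weight_def by (simp add: cmod_cinner_commute)
  also have "\<dots> \<le> 1"
    using bessel_inequality[OF X, of "\<lambda>i. U i j"] orthonormal_family_cnorm2[OF unitary_eigenbasis_orthonormal_cols[OF U] j]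
    by simp
  finally show ?thesis .
qed

lemma ky_fan_max:
  assumes U: "unitary_eigenbasis m M U \<nu>" and X: "orthonormal_family m s X" and sm: "s \<le> m"
    and mono: "\<And>j j'. j \<le> j' \<Longrightarrow> j' < m \<Longrightarrow> \<nu> j' \<le> \<nu> j"
  shows "(\<Sum>q<s. Re (quad_form m M (X q))) \<le> (\<Sum>j<s. \<nu> j)"
proof -
  let ?g = "spectral_weight m U s X"
  define p where "p = \<nu> (s - 1)"
  have "(\<Sum>j\<in>{..<m}. \<nu> j * ?g j) \<le> 1 * sum \<nu> {..<s} + 0 * p"
  proof (rule bathtub_inequality)
    show "0 \<le> (\<nu> j - p) * (1 - ?g j)" if "j \<in> {..<s}" for j
      using that sm mono[of j "s - 1"] spectral_weight_le_one[OF U X, of j]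
      unfolding p_def by (intro mult_nonneg_nonneg) auto
    show "0 \<le> (p - \<nu> j) * ?g j" if "j \<in> {..<m} - {..<s}" for j
      using that mono[of "s - 1" j] spectral_weight_nonneg
      unfolding p_def by (intro mult_nonneg_nonneg) auto
  qed (use sm sum_spectral_weights[OF U X] in auto)
  then show ?thesis
    unfolding sum_quad_form_eq_spectral_weights[OF U] by simp
qed

lemma ky_fan_min:
  assumes U: "unitary_eigenbasis m M U \<nu>" and X: "orthonormal_family m s X" and sm: "s \<le> m"
    and mono: "\<And>j j'. j \<le> j' \<Longrightarrow> j' < m \<Longrightarrow> \<nu> j' \<le> \<nu> j"
  shows "(\<Sum>j\<in>{m - s..<m}. \<nu> j) \<le> (\<Sum>q<s. Re (quad_form m M (X q)))"
proof -
  let ?g = "spectral_weight m U s X"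
  define p where "p = - \<nu> (m - s)"
  have "(\<Sum>j\<in>{..<m}. - \<nu> j * ?g j) \<le> 1 * sum (\<lambda>j. - \<nu> j) {m - s..<m} + 0 * p"
  proof (rule bathtub_inequality)
    show "0 \<le> (- \<nu> j - p) * (1 - ?g j)" if "j \<in> {m - s..<m}" for j
      using that mono[of "m - s" j] spectral_weight_le_one[OF U X, of j]
      unfolding p_def by (intro mult_nonneg_nonneg) auto
    show "0 \<le> (p - - \<nu> j) * ?g j" if "j \<in> {..<m} - {m - s..<m}" for j
    proof (cases "s = 0")
      case False
      then show ?thesis
        using that sm mono[of j "m - s"] spectral_weight_nonneg
        unfolding p_def by (intro mult_nonneg_nonneg) auto
    qed (simp add: spectral_weight_def)
  qed (use sm sum_spectral_weights[OF U X] in auto)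
  then show ?thesis
    unfolding sum_quad_form_eq_spectral_weights[OF U] by (simp add: sum_negf)
qed

section \<open>Deleting a coordinate\<close>

definition insert_coord :: "nat \<Rightarrow> (nat \<Rightarrow> 'a :: zero) \<Rightarrow> nat \<Rightarrow> 'a" where
  "insert_coord k y i = (if i = k then 0 else y (delete_index k i))"

definition delete_coord :: "nat \<Rightarrow> (nat \<Rightarrow> 'a) \<Rightarrow> nat \<Rightarrow> 'a" where
  "delete_coord k x j = x (insert_index k j)"

lemma insert_coord_at [simp]: "insert_coord k y k = 0"
  unfolding insert_coord_def by simp

lemma insert_coord_insert_index [simp]: "insert_coord k y (insert_index k j) = y j"
  unfolding insert_coord_def by simp

lemma insert_delete_coord:
  assumes "x k = 0"
  shows "insert_coord k (delete_coord k x) = x"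
proof
  fix i
  show "insert_coord k (delete_coord k x) i = x i"
    using assms unfolding insert_coord_def delete_coord_def insert_index_def delete_index_def
    by auto
qed

lemma sum_lessThan_insert_index:
  assumes "k < n"
  shows "(\<Sum>i<n. f i) = f k + (\<Sum>j<n - 1. f (insert_index k j))"
proof -
  have "insert_index k ` {..<n - 1} = {..<n} - {k}"
    using insert_index_image[of k "n - 1"] assms by (simp add: lessThan_atLeast0)
  then have "(\<Sum>j<n - 1. f (insert_index k j)) = (\<Sum>i\<in>{..<n} - {k}. f i)"
    using sum.reindex[OF insert_index_inj_on[of k "{..<n - 1}"], of f] by simp
  then show ?thesis
    using assms by (simp add: sum.remove[of "{..<n}" k])
qed

lemma cinner_insert_coord:
  assumes "k < n"
  shows "cinner n (insert_coord k x) (insert_coord k y) = cinner (n - 1) x y"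
  unfolding cinner_def sum_lessThan_insert_index[OF assms] by simp

lemma index_mat_delete_diag:
  assumes "A \<in> carrier_mat n n" and "i < n - 1" and "j < n - 1"
  shows "mat_delete A k k $$ (i, j) = A $$ (insert_index k i, insert_index k j)"
  using assms unfolding mat_delete_def insert_index_def by auto

lemma quad_form_insert_coord:
  assumes A: "A \<in> carrier_mat n n" and k: "k < n"
  shows "quad_form n A (insert_coord k y) = quad_form (n - 1) (mat_delete A k k) y"
  unfolding quad_form_def sum_lessThan_insert_index[OF k] by (simp add: index_mat_delete_diag[OF A])

lemma orthonormal_family_insert_coord:
  assumes "k < n" and "orthonormal_family (n - 1) s Y"
  shows "orthonormal_family n s (\<lambda>q. insert_coord k (Y q))"
  using assms unfolding orthonormal_family_def by (simp add: cinner_insert_coord)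

lemma cinner_delete_coord:
  assumes "k < n" and "x k = 0" and "y k = 0"
  shows "cinner (n - 1) (delete_coord k x) (delete_coord k y) = cinner n x y"
  using cinner_insert_coord[OF assms(1), of "delete_coord k x" "delete_coord k y"]
  by (simp add: insert_delete_coord assms(2,3))

lemma orthonormal_family_delete_coord:
  assumes "k < n" and "orthonormal_family n s X" and "\<And>q. q < s \<Longrightarrow> X q k = 0"
  shows "orthonormal_family (n - 1) s (\<lambda>q. delete_coord k (X q))"
  unfolding orthonormal_family_def
proof (intro allI impI)
  fix q q' assume "q < s" "q' < s"
  then show "cinner (n - 1) (delete_coord k (X q)) (delete_coord k (X q')) = (if q = q' then 1 else 0)"
    using cinner_delete_coord[of k n "X q" "X q'"] assms orthonormal_familyD[OF assms(2)] by simp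
qed

lemma quad_form_delete_coord:
  assumes "A \<in> carrier_mat n n" and "k < n" and "x k = 0"
  shows "quad_form (n - 1) (mat_delete A k k) (delete_coord k x) = quad_form n A x"
  using quad_form_insert_coord[OF assms(1,2), of "delete_coord k x"]
  unfolding insert_delete_coord[of x k, OF assms(3)] by simp

lemma hermitian_mat_delete:
  assumes h: "hermitian A" and A: "A \<in> carrier_mat n n" and k: "k < n"
  shows "hermitian (mat_delete A k k)"
proof (rule hermitianI[OF mat_delete_carrier[OF A]])
  fix i j assume ij: "i < n - 1" "j < n - 1"
  have "insert_index k i < n" "insert_index k j < n"
    using ij k unfolding insert_index_def by auto
  then show "mat_delete A k k $$ (i, j) = cnj (mat_delete A k k $$ (j, i))"
    unfolding index_mat_delete_diag[OF A ij] index_mat_delete_diag[OF A ij(2,1)]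
    by (rule hermitian_entry[OF h A])
qed

section \<open>Orthonormal frames with a vanishing coordinate\<close>

lemma cinner_vec:
  assumes "v \<in> carrier_vec m" and "w \<in> carrier_vec m"
  shows "cinner m (\<lambda>i. w $ i) (\<lambda>i. v $ i) = v \<bullet>c w"
  using assms unfolding cinner_def scalar_prod_def
  by (simp add: lessThan_atLeast0 mult.commute)

lemma orthonormal_family_orthogonal_to_vec:
  assumes v: "v \<in> carrier_vec (Suc t)" and v0: "v \<noteq> 0\<^sub>v (Suc t)"
  obtains \<alpha> where "orthonormal_family (Suc t) t \<alpha>"
    and "\<And>q. q < t \<Longrightarrow> cinner (Suc t) (\<lambda>i. v $ i) (\<alpha> q) = 0"
proof -
  obtain ws where ws: "set ws \<subseteq> carrier_vec (Suc t)" "length ws = Suc t"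
    "hd ws = vec_normalize v"
    and orth: "\<And>i j. i < Suc t \<Longrightarrow> j < Suc t \<Longrightarrow> ws ! i \<bullet>c ws ! j = (if i = j then 1 else 0)"
    using orthonormal_basis_completion[OF v v0] by metis
  have wsi: "ws ! i \<in> carrier_vec (Suc t)" if "i < Suc t" for i
    using ws that by auto
  define \<alpha> where "\<alpha> q i = ws ! Suc q $ i" for q i
  have "cinner (Suc t) (\<alpha> q) (\<alpha> q') = ws ! Suc q' \<bullet>c ws ! Suc q" if "q < t" "q' < t" for q q'
    unfolding \<alpha>_def using cinner_vec[OF wsi[of "Suc q'"] wsi[of "Suc q"]] that by simp
  then have "orthonormal_family (Suc t) t \<alpha>"
    unfolding orthonormal_family_def using orth by auto
  moreover have "cinner (Suc t) (\<lambda>i. v $ i) (\<alpha> q) = 0" if "q < t" for q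
  proof -
    define c where "c = complex_of_real (1 / sqrt (Re (v \<bullet>c v)))"
    have "v \<bullet>c v \<noteq> 0"
      using conjugate_square_eq_0_vec[OF v] v0 by simp
    then have "c \<noteq> 0"
      unfolding c_def using conjugate_square_ge_0_vec[of v]
      by (auto simp: less_eq_complex_def complex_eq_iff)
    have "ws ! 0 = c \<cdot>\<^sub>v v"
      using ws(2,3) unfolding c_def vec_normalize_def by (cases ws) auto
    then have "0 = ws ! Suc q \<bullet>c (c \<cdot>\<^sub>v v)"
      using orth[of "Suc q" 0] that by simp
    also have "\<dots> = cnj c * (ws ! Suc q \<bullet>c v)"
      using sprodc_smult[OF wsi[of "Suc q"] v, of 1 c] that by simp
    finally have "ws ! Suc q \<bullet>c v = 0"
      using \<open>c \<noteq> 0\<close> by simp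
    then show ?thesis
      unfolding \<alpha>_def using cinner_vec[OF wsi[of "Suc q"] v] that by simp
  qed
  ultimately show thesis using that by blast
qed

lemma orthonormal_family_orthogonal_to:
  obtains \<alpha> where "orthonormal_family (Suc t) t \<alpha>" and "\<And>q. q < t \<Longrightarrow> cinner (Suc t) g (\<alpha> q) = 0"
proof (cases "\<forall>i<Suc t. g i = 0")
  case True
  obtain \<alpha> where "orthonormal_family (Suc t) t \<alpha>"
    using orthonormal_family_orthogonal_to_vec[of "unit_vec (Suc t) 0" t] by auto
  moreover have "cinner (Suc t) g (\<alpha> q) = 0" for q
    using True unfolding cinner_def by simp
  ultimately show thesis using that by blast
next
  case False
  then have "vec (Suc t) g \<noteq> 0\<^sub>v (Suc t)"
    by (metis index_vec index_zero_vec(1))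
  then obtain \<alpha> where "orthonormal_family (Suc t) t \<alpha>"
    and "\<And>q. q < t \<Longrightarrow> cinner (Suc t) (\<lambda>i. vec (Suc t) g $ i) (\<alpha> q) = 0"
    using orthonormal_family_orthogonal_to_vec[of "vec (Suc t) g" t] by auto
  moreover have "cinner (Suc t) (\<lambda>i. vec (Suc t) g $ i) = cinner (Suc t) g"
    unfolding cinner_def[abs_def] by (intro ext sum.cong) auto
  ultimately show thesis using that by auto
qed

lemma cinner_orthonormal_combinations:
  assumes "orthonormal_family m s Y"
  shows "cinner m (\<lambda>i. \<Sum>p<s. a p * Y p i) (\<lambda>i. \<Sum>p<s. b p * Y p i) = cinner s a b"
proof -
  have "cinner m (\<lambda>i. \<Sum>p<s. a p * Y p i) (\<lambda>i. \<Sum>p<s. b p * Y p i) =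
      (\<Sum>p<s. cnj (a p) * cinner m (Y p) (\<lambda>i. \<Sum>p<s. b p * Y p i))"
    by (rule cinner_sum_left)
  also have "\<dots> = (\<Sum>p<s. cnj (a p) * b p)"
    by (intro sum.cong refl) (simp add: cinner_orthonormal_combination[OF assms])
  finally show ?thesis
    unfolding cinner_def[of s] .
qed

lemma orthonormal_family_combinations:
  assumes "orthonormal_family m s Y" and "orthonormal_family s r \<alpha>"
  shows "orthonormal_family m r (\<lambda>q i. \<Sum>p<s. \<alpha> q p * Y p i)"
  using assms(2) unfolding orthonormal_family_def
  by (simp add: cinner_orthonormal_combinations[OF assms(1)])

lemma window_frame:
  assumes U: "orthonormal_family n n (\<lambda>j i. U i j)" and at: "a + t < n"
  obtains X where "orthonormal_family n t X" and "\<And>q. q < t \<Longrightarrow> X q k = 0"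
    and "\<And>q i. q < t \<Longrightarrow> i < n \<Longrightarrow> i < a \<or> a + t < i \<Longrightarrow> cinner n (\<lambda>r. U r i) (X q) = 0"
proof -
  obtain \<alpha> where \<alpha>: "orthonormal_family (Suc t) t \<alpha>"
    and \<alpha>k: "\<And>q. q < t \<Longrightarrow> cinner (Suc t) (\<lambda>p. cnj (U k (a + p))) (\<alpha> q) = 0"
    using orthonormal_family_orthogonal_to by blast
  define Y where "Y p r = U r (a + p)" for p r
  have Y: "orthonormal_family n (Suc t) Y"
    using U at unfolding Y_def orthonormal_family_def by simp
  define X where "X q r = (\<Sum>p<Suc t. \<alpha> q p * Y p r)" for q r
  show thesis
  proof
    show "orthonormal_family n t X"
      unfolding X_def by (rule orthonormal_family_combinations[OF Y \<alpha>])
    show "X q k = 0" if "q < t" for q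
      using \<alpha>k[OF that] unfolding X_def Y_def cinner_def by (simp add: mult.commute)
    show "cinner n (\<lambda>r. U r i) (X q) = 0" if "q < t" "i < n" "i < a \<or> a + t < i" for q i
      using U that at unfolding X_def[abs_def] cinner_sum_right Y_def orthonormal_family_def
      by (intro sum.neutral) auto
  qed
qed

section \<open>Eigenvalue sums of the principal submatrices\<close>

text \<open>Eigenvalues are indexed from 0 here: \<open>lam j\<close> is the \<open>(j+1)\<close>-st largest eigenvalue of \<open>A\<close>
  and \<open>mu k j\<close> that of \<open>A\<close> with row and column \<open>k\<close> deleted.\<close>
locale principal_submatrix_spectra =
  fixes A :: "complex mat" and n :: nat
    and U :: "nat \<Rightarrow> nat \<Rightarrow> complex" and lam :: "nat \<Rightarrow> real"
    and V :: "nat \<Rightarrow> nat \<Rightarrow> nat \<Rightarrow> complex" and mu :: "nat \<Rightarrow> nat \<Rightarrow> real"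
  assumes carrier: "A \<in> carrier_mat n n"
    and eigenbasis: "unitary_eigenbasis n A U lam"
    and lam_antimono: "\<And>j j'. j \<le> j' \<Longrightarrow> j' < n \<Longrightarrow> lam j' \<le> lam j"
    and sub_eigenbasis: "\<And>k. k < n \<Longrightarrow> unitary_eigenbasis (n - 1) (mat_delete A k k) (V k) (mu k)"
    and mu_antimono: "\<And>k j j'. k < n \<Longrightarrow> j \<le> j' \<Longrightarrow> j' < n - 1 \<Longrightarrow> mu k j' \<le> mu k j"
begin

definition deleted_top_sum :: "nat \<Rightarrow> real" where
  "deleted_top_sum t = (\<Sum>k<n. \<Sum>j<t. mu k j)"

lemma deleted_top_sum_diff:
  assumes "s \<le> t"
  shows "deleted_top_sum t - deleted_top_sum s = (\<Sum>k<n. \<Sum>j\<in>{s..<t}. mu k j)"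
proof -
  have "(\<Sum>j<t. mu k j) - (\<Sum>j<s. mu k j) = (\<Sum>j\<in>{s..<t}. mu k j)" for k
    using sum_diff_nat_ivl[of 0 s t "mu k"] assms by (simp add: atLeast0LessThan)
  then show ?thesis
    unfolding deleted_top_sum_def by (simp add: sum_subtractf[symmetric])
qed

definition frame_weight :: "nat \<Rightarrow> (nat \<Rightarrow> nat \<Rightarrow> nat \<Rightarrow> complex) \<Rightarrow> nat \<Rightarrow> real" where
  "frame_weight t X i = (\<Sum>k<n. spectral_weight n U t (X k) i)"

lemma frame_weight_nonneg: "0 \<le> frame_weight t X i"
  unfolding frame_weight_def by (intro sum_nonneg spectral_weight_nonneg)

context
  fixes t :: nat and X :: "nat \<Rightarrow> nat \<Rightarrow> nat \<Rightarrow> complex"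
  assumes frames: "\<And>k. k < n \<Longrightarrow> orthonormal_family n t (X k)"
    and frames_vanish: "\<And>k q. k < n \<Longrightarrow> q < t \<Longrightarrow> X k q k = 0"
begin

lemma sum_quad_forms_eq_frame_weights:
  "(\<Sum>k<n. \<Sum>q<t. Re (quad_form n A (X k q))) = (\<Sum>i<n. lam i * frame_weight t X i)"
  unfolding sum_quad_form_eq_spectral_weights[OF eigenbasis] frame_weight_def sum_distrib_left
  by (rule sum.swap)

lemma sum_frame_weights: "(\<Sum>i<n. frame_weight t X i) = real n * real t"
  unfolding frame_weight_def
  by (subst sum.swap) (simp add: sum_spectral_weights[OF eigenbasis frames])

lemma frame_weight_le:
  assumes i: "i < n"
  shows "frame_weight t X i \<le> real n - 1"
proof -
  have "frame_weight t X i \<le> (\<Sum>k<n. 1 - (cmod (U k i))\<^sup>2)"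
    unfolding frame_weight_def
    using spectral_weight_le_coordinate_deleted[OF eigenbasis frames i _ frames_vanish]
    by (intro sum_mono) auto
  also have "\<dots> = real n - cnorm2 n (\<lambda>k. U k i)"
    unfolding cnorm2_def by (simp add: sum_subtractf)
  also have "cnorm2 n (\<lambda>k. U k i) = 1"
    using orthonormal_family_cnorm2[OF unitary_eigenbasis_orthonormal_cols[OF eigenbasis] i] .
  finally show ?thesis .
qed

lemma frames_quad_forms_le_deleted_top_sum:
  assumes "t \<le> n - 1"
  shows "(\<Sum>k<n. \<Sum>q<t. Re (quad_form n A (X k q))) \<le> deleted_top_sum t"
  unfolding deleted_top_sum_def
proof (rule sum_mono)
  fix k assume "k \<in> {..<n}"
  then have k: "k < n" by simp
  have "(\<Sum>q<t. Re (quad_form n A (X k q))) =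
      (\<Sum>q<t. Re (quad_form (n - 1) (mat_delete A k k) (delete_coord k (X k q))))"
    using quad_form_delete_coord[OF carrier k] frames_vanish[OF k] by simp
  also have "\<dots> \<le> (\<Sum>j<t. mu k j)"
    using orthonormal_family_delete_coord[OF k frames[OF k] frames_vanish[OF k]] assms mu_antimono[OF k]
    by (intro ky_fan_max[OF sub_eigenbasis[OF k]])
  finally show "(\<Sum>q<t. Re (quad_form n A (X k q))) \<le> (\<Sum>j<t. mu k j)" .
qed

lemma deleted_bottom_sum_le_frames_quad_forms:
  assumes "t \<le> n - 1"
  shows "(\<Sum>k<n. \<Sum>j\<in>{n - 1 - t..<n - 1}. mu k j) \<le> (\<Sum>k<n. \<Sum>q<t. Re (quad_form n A (X k q)))"
proof (rule sum_mono)
  fix k assume "k \<in> {..<n}"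
  then have k: "k < n" by simp
  have "(\<Sum>j\<in>{n - 1 - t..<n - 1}. mu k j) \<le>
      (\<Sum>q<t. Re (quad_form (n - 1) (mat_delete A k k) (delete_coord k (X k q))))"
    using orthonormal_family_delete_coord[OF k frames[OF k] frames_vanish[OF k]] assms mu_antimono[OF k]
    by (intro ky_fan_min[OF sub_eigenbasis[OF k]])
  also have "\<dots> = (\<Sum>q<t. Re (quad_form n A (X k q)))"
    using quad_form_delete_coord[OF carrier k] frames_vanish[OF k] by simp
  finally show "(\<Sum>j\<in>{n - 1 - t..<n - 1}. mu k j) \<le> (\<Sum>q<t. Re (quad_form n A (X k q)))" .
qed

end

definition sub_eigenvector :: "nat \<Rightarrow> nat \<Rightarrow> nat \<Rightarrow> complex" where
  "sub_eigenvector k q = insert_coord k (\<lambda>r. V k r q)"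

lemma sub_eigenvector_vanish: "sub_eigenvector k q k = 0"
  unfolding sub_eigenvector_def by simp

lemma sub_eigenvectors_orthonormal:
  assumes "k < n" and "t \<le> n - 1"
  shows "orthonormal_family n t (sub_eigenvector k)"
  unfolding sub_eigenvector_def using assms(1)
proof (rule orthonormal_family_insert_coord)
  show "orthonormal_family (n - 1) t (\<lambda>q r. V k r q)"
    using unitary_eigenbasis_orthonormal_cols[OF sub_eigenbasis[OF assms(1)]] assms(2)
    by (rule orthonormal_family_mono)
qed

lemma deleted_top_sum_eq_frame_weights:
  assumes t: "t \<le> n - 1"
  shows "deleted_top_sum t = (\<Sum>i<n. lam i * frame_weight t sub_eigenvector i)"
proof -
  have "Re (quad_form n A (sub_eigenvector k q)) = mu k q" if "k < n" "q < t" for k q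
    using quad_form_insert_coord[OF carrier that(1)] quad_form_eigenvector[OF sub_eigenbasis[OF that(1)]]
      that t
    unfolding sub_eigenvector_def by simp
  then have "deleted_top_sum t = (\<Sum>k<n. \<Sum>q<t. Re (quad_form n A (sub_eigenvector k q)))"
    unfolding deleted_top_sum_def by simp
  also have "\<dots> = (\<Sum>i<n. lam i * frame_weight t sub_eigenvector i)"
    using sub_eigenvectors_orthonormal t sub_eigenvector_vanish
    by (intro sum_quad_forms_eq_frame_weights) auto
  finally show ?thesis .
qed

lemma deleted_top_sum_le:
  assumes t: "t \<le> n - 1"
  shows "deleted_top_sum t \<le> (real n - 1) * (\<Sum>i<t. lam i) + real t * lam t"
proof -
  let ?d = "frame_weight t sub_eigenvector"
  have frames: "\<And>k. k < n \<Longrightarrow> orthonormal_family n t (sub_eigenvector k)"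
    and vanish: "\<And>k q. k < n \<Longrightarrow> q < t \<Longrightarrow> sub_eigenvector k q k = 0"
    using sub_eigenvectors_orthonormal t sub_eigenvector_vanish by auto
  have "(\<Sum>i\<in>{..<n}. lam i * ?d i) \<le> (real n - 1) * sum lam {..<t} + real t * lam t"
  proof (rule bathtub_inequality)
    show "0 \<le> (lam i - lam t) * (real n - 1 - ?d i)" if "i \<in> {..<t}" for i
      using that t lam_antimono[of i t] frame_weight_le[OF frames vanish, of i]
      by (intro mult_nonneg_nonneg) auto
    show "0 \<le> (lam t - lam i) * ?d i" if "i \<in> {..<n} - {..<t}" for i
      using that lam_antimono[of t i] frame_weight_nonneg by (intro mult_nonneg_nonneg) auto
    show "sum ?d {..<n} = (real n - 1) * real (card {..<t}) + real t"
      using sum_frame_weights[OF frames vanish] by (simp add: algebra_simps)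
  qed (use t in auto)
  then show ?thesis
    unfolding deleted_top_sum_eq_frame_weights[OF t] .
qed

lemma deleted_top_sum_full: "deleted_top_sum (n - 1) = (real n - 1) * (\<Sum>i<n. lam i)"
proof -
  let ?d = "frame_weight (n - 1) sub_eigenvector"
  have frames: "\<And>k. k < n \<Longrightarrow> orthonormal_family n (n - 1) (sub_eigenvector k)"
    and vanish: "\<And>k q. k < n \<Longrightarrow> q < n - 1 \<Longrightarrow> sub_eigenvector k q k = 0"
    using sub_eigenvectors_orthonormal sub_eigenvector_vanish by auto
  have "(\<Sum>i<n. real n - 1 - ?d i) = 0"
    using sum_frame_weights[OF frames vanish] by (cases n) (simp_all add: sum_subtractf algebra_simps)
  then have "\<forall>i\<in>{..<n}. real n - 1 - ?d i = 0"
    using frame_weight_le[OF frames vanish] by (subst sum_nonneg_eq_0_iff[symmetric]) auto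
  then have "?d i = real n - 1" if "i < n" for i
    using that by simp
  then show ?thesis
    unfolding deleted_top_sum_eq_frame_weights[OF order_refl] sum_distrib_left
    by (simp add: mult.commute)
qed

lemma window_frames:
  assumes "a + t < n"
  obtains X where "\<And>k. k < n \<Longrightarrow> orthonormal_family n t (X k)"
    and "\<And>k q. k < n \<Longrightarrow> q < t \<Longrightarrow> X k q k = 0"
    and "\<And>k q i. k < n \<Longrightarrow> q < t \<Longrightarrow> i < n \<Longrightarrow> i < a \<or> a + t < i \<Longrightarrow>
      cinner n (\<lambda>r. U r i) (X k q) = 0"
proof -
  let ?P = "\<lambda>k Y. orthonormal_family n t Y \<and> (\<forall>q<t. Y q k = 0) \<and>
    (\<forall>q<t. \<forall>i<n. i < a \<or> a + t < i \<longrightarrow> cinner n (\<lambda>r. U r i) (Y q) = 0)"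
  have "\<forall>k. \<exists>Y. ?P k Y"
  proof
    fix k
    obtain Y where "orthonormal_family n t Y" and "\<And>q. q < t \<Longrightarrow> Y q k = 0"
      and "\<And>q i. q < t \<Longrightarrow> i < n \<Longrightarrow> i < a \<or> a + t < i \<Longrightarrow> cinner n (\<lambda>r. U r i) (Y q) = 0"
      by (rule window_frame[OF unitary_eigenbasis_orthonormal_cols[OF eigenbasis] assms, where k = k]) blast
    then show "\<exists>Y. ?P k Y" by blast
  qed
  from choice[OF this] obtain X where "\<forall>k. ?P k (X k)" ..
  then show thesis
    by (intro that) blast+
qed

lemma deleted_top_sum_ge_head:
  assumes s: "s < n"
  shows "real s * lam 0 + (real n - 1) * (\<Sum>i\<in>{1..s}. lam i) \<le> deleted_top_sum s"
proof -
  from s have "0 + s < n" by simp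
  then obtain X where frames: "\<And>k. k < n \<Longrightarrow> orthonormal_family n s (X k)"
    and vanish: "\<And>k q. k < n \<Longrightarrow> q < s \<Longrightarrow> X k q k = 0"
    and window: "\<And>k q i. k < n \<Longrightarrow> q < s \<Longrightarrow> i < n \<Longrightarrow> s < i \<Longrightarrow> cinner n (\<lambda>r. U r i) (X k q) = 0"
    by (rule window_frames) auto
  let ?d = "frame_weight s X"
  have "(\<Sum>i\<in>{..<n}. - lam i * ?d i) \<le> (real n - 1) * sum (\<lambda>i. - lam i) {1..s} + real s * - lam 0"
  proof (rule bathtub_inequality)
    show "0 \<le> (- lam i - - lam 0) * (real n - 1 - ?d i)" if "i \<in> {1..s}" for i
      using that s lam_antimono[of 0 i] frame_weight_le[OF frames vanish, of i]
      by (intro mult_nonneg_nonneg) auto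
    show "0 \<le> (- lam 0 - - lam i) * ?d i" if "i \<in> {..<n} - {1..s}" for i
    proof (cases "i = 0")
      case False
      with that have "?d i = 0"
        unfolding frame_weight_def spectral_weight_def using window by simp
      then show ?thesis by simp
    qed simp
    show "sum ?d {..<n} = (real n - 1) * real (card {1..s}) + real s"
      using sum_frame_weights[OF frames vanish] by (simp add: algebra_simps)
  qed (use s in auto)
  then have "real s * lam 0 + (real n - 1) * (\<Sum>i\<in>{1..s}. lam i) \<le> (\<Sum>i<n. lam i * ?d i)"
    by (simp add: sum_negf)
  also have "\<dots> = (\<Sum>k<n. \<Sum>q<s. Re (quad_form n A (X k q)))"
    by (rule sum_quad_forms_eq_frame_weights[OF frames vanish, symmetric])
  also have "\<dots> \<le> deleted_top_sum s"
    using frames_quad_forms_le_deleted_top_sum[OF frames vanish] s by simp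
  finally show ?thesis .
qed

lemma deleted_bottom_sum_le:
  assumes r: "r < n"
  shows "(\<Sum>k<n. \<Sum>j\<in>{r..<n - 1}. mu k j)
    \<le> (real n - 1) * sum lam {r..<n - 1} + real (n - 1 - r) * lam (n - 1)"
proof -
  define t where "t = n - 1 - r"
  have n: "0 < n" and rt: "r + t = n - 1"
    using r unfolding t_def by auto
  obtain X where frames: "\<And>k. k < n \<Longrightarrow> orthonormal_family n t (X k)"
    and vanish: "\<And>k q. k < n \<Longrightarrow> q < t \<Longrightarrow> X k q k = 0"
    and window: "\<And>k q i. k < n \<Longrightarrow> q < t \<Longrightarrow> i < n \<Longrightarrow> i < r \<or> r + t < i \<Longrightarrow>
      cinner n (\<lambda>r. U r i) (X k q) = 0"
    using window_frames[of r t] n rt by auto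
  let ?d = "frame_weight t X"
  have "(\<Sum>k<n. \<Sum>j\<in>{r..<n - 1}. mu k j) \<le> (\<Sum>k<n. \<Sum>q<t. Re (quad_form n A (X k q)))"
    using deleted_bottom_sum_le_frames_quad_forms[OF frames vanish] rt by (simp add: t_def)
  also have "\<dots> = (\<Sum>i\<in>{..<n}. lam i * ?d i)"
    by (rule sum_quad_forms_eq_frame_weights[OF frames vanish])
  also have "\<dots> \<le> (real n - 1) * sum lam {r..<n - 1} + real t * lam (n - 1)"
  proof (rule bathtub_inequality)
    show "0 \<le> (lam i - lam (n - 1)) * (real n - 1 - ?d i)" if "i \<in> {r..<n - 1}" for i
      using that lam_antimono[of i "n - 1"] frame_weight_le[OF frames vanish, of i]
      by (intro mult_nonneg_nonneg) auto
    show "0 \<le> (lam (n - 1) - lam i) * ?d i" if "i \<in> {..<n} - {r..<n - 1}" for i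
    proof (cases "i < r")
      case True
      then have "?d i = 0"
        unfolding frame_weight_def spectral_weight_def using window that by simp
      then show ?thesis by simp
    next
      case False
      with that have "i = n - 1" by auto
      then show ?thesis by simp
    qed
    show "sum ?d {..<n} = (real n - 1) * real (card {r..<n - 1}) + real t"
      using sum_frame_weights[OF frames vanish] rt n by (simp add: t_def algebra_simps of_nat_diff)
  qed auto
  finally show ?thesis
    unfolding t_def .
qed

lemma deleted_top_sum_ge_tail:
  assumes r: "r < n"
  shows "(real n - 1) * (\<Sum>i<r. lam i) + real r * lam (n - 1) \<le> deleted_top_sum r"
proof -
  have split_lam: "(\<Sum>i<n. lam i) = (\<Sum>i<r. lam i) + sum lam {r..<n - 1} + lam (n - 1)"
  proof -
    have "(\<Sum>i<n. lam i) = (\<Sum>i<n - 1. lam i) + lam (n - 1)"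
      using r by (metis Suc_pred' gr_implies_not0 neq0_conv sum.lessThan_Suc)
    also have "(\<Sum>i<n - 1. lam i) = (\<Sum>i<r. lam i) + sum lam {r..<n - 1}"
      using r by (simp add: sum.atLeastLessThan_concat flip: atLeast0LessThan)
    finally show ?thesis .
  qed
  have "real (n - 1 - r) = real n - 1 - real r"
    using r by (simp add: of_nat_diff)
  then have "(real n - 1) * (\<Sum>i<r. lam i) + real r * lam (n - 1) =
      (real n - 1) * (\<Sum>i<n. lam i) -
      ((real n - 1) * sum lam {r..<n - 1} + real (n - 1 - r) * lam (n - 1))"
    unfolding split_lam by (simp add: algebra_simps)
  also have "\<dots> \<le> deleted_top_sum (n - 1) - (\<Sum>k<n. \<Sum>j\<in>{r..<n - 1}. mu k j)"
    using deleted_bottom_sum_le[OF r] deleted_top_sum_full by linarith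
  also have "\<dots> = deleted_top_sum r"
    using deleted_top_sum_diff[of r "n - 1"] r by linarith
  finally show ?thesis .
qed

lemma deleted_window_sum_bounds:
  assumes l: "1 \<le> l" and lr: "l \<le> r" and r: "r < n"
  shows "real (n - l) * lam (l - 1) + real (n - 1) * (\<Sum>j\<in>{l..<r}. lam j) + real r * lam (n - 1)
      \<le> (\<Sum>k<n. \<Sum>j\<in>{l - 1..<r}. mu k j)"
    and "(\<Sum>k<n. \<Sum>j\<in>{l - 1..<r}. mu k j)
      \<le> real (n - l) * lam 0 + real (n - 1) * (\<Sum>j\<in>{l..<r}. lam j) + real r * lam r"
proof -
  define s where "s = l - 1"
  have ls: "l = Suc s" and sr: "s < r" and s: "s < n" and s': "s \<le> n - 1" and r': "r \<le> n - 1"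
    using l lr r unfolding s_def by auto
  have mid: "(\<Sum>k<n. \<Sum>j\<in>{s..<r}. mu k j) = deleted_top_sum r - deleted_top_sum s"
    using deleted_top_sum_diff[of s r] sr by simp
  have lam_top: "(\<Sum>i<r. lam i) = (\<Sum>i<s. lam i) + lam s + (\<Sum>j\<in>{l..<r}. lam j)"
    using sum.atLeastLessThan_concat[of 0 l r lam] lr unfolding ls by (simp add: atLeast0LessThan)
  have "(\<Sum>i<s. lam i) + lam s = lam 0 + (\<Sum>i\<in>{1..s}. lam i)"
    by (induction s) simp_all
  with lam_top have lam_head: "(\<Sum>i<r. lam i) = lam 0 + (\<Sum>i\<in>{1..s}. lam i) + (\<Sum>j\<in>{l..<r}. lam j)"
    by simp
  have nl: "real (n - l) = real n - 1 - real s" and n1: "real (n - 1) = real n - 1"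
    using r lr unfolding ls by (simp_all add: of_nat_diff)
  show "real (n - l) * lam (l - 1) + real (n - 1) * (\<Sum>j\<in>{l..<r}. lam j) + real r * lam (n - 1)
      \<le> (\<Sum>k<n. \<Sum>j\<in>{l - 1..<r}. mu k j)"
    using deleted_top_sum_ge_tail[OF r] deleted_top_sum_le[OF s'] lam_top
    unfolding mid[folded s_def] nl n1 s_def[symmetric] by (simp add: algebra_simps)
  show "(\<Sum>k<n. \<Sum>j\<in>{l - 1..<r}. mu k j)
      \<le> real (n - l) * lam 0 + real (n - 1) * (\<Sum>j\<in>{l..<r}. lam j) + real r * lam r"
    using deleted_top_sum_le[OF r'] deleted_top_sum_ge_head[OF s] lam_head
    unfolding mid[folded s_def] nl n1 s_def[symmetric] by (simp add: algebra_simps)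
qed

end

lemma principal_submatrix_spectra_exists:
  assumes A: "A \<in> carrier_mat n n" and h: "hermitian A"
  shows "\<exists>U V. principal_submatrix_spectra A n U (\<lambda>j. eig A (Suc j))
    V (\<lambda>k j. eig (principal_sub A (Suc k)) (Suc j))"
proof -
  obtain U where U: "unitary_eigenbasis n A U (\<lambda>j. eig A (Suc j))"
    using hermitian_eigenbasis[OF A h] by blast
  have sub: "mat_delete A k k \<in> carrier_mat (n - 1) (n - 1)" "hermitian (mat_delete A k k)"
    "principal_sub A (Suc k) = mat_delete A k k" if "k < n" for k
    using mat_delete_carrier[OF A] hermitian_mat_delete[OF h A that] unfolding principal_sub_def by auto
  have "\<forall>k. \<exists>W. k < n \<longrightarrow>
      unitary_eigenbasis (n - 1) (mat_delete A k k) W (\<lambda>j. eig (principal_sub A (Suc k)) (Suc j))"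
  proof
    fix k
    show "\<exists>W. k < n \<longrightarrow>
        unitary_eigenbasis (n - 1) (mat_delete A k k) W (\<lambda>j. eig (principal_sub A (Suc k)) (Suc j))"
    proof (cases "k < n")
      case True
      then show ?thesis using hermitian_eigenbasis[OF sub(1,2)[OF True]] sub(3)[OF True] by simp
    qed simp
  qed
  from choice[OF this] obtain V where V: "\<forall>k. k < n \<longrightarrow>
      unitary_eigenbasis (n - 1) (mat_delete A k k) (V k) (\<lambda>j. eig (principal_sub A (Suc k)) (Suc j))" ..
  have "principal_submatrix_spectra A n U (\<lambda>j. eig A (Suc j))
      V (\<lambda>k j. eig (principal_sub A (Suc k)) (Suc j))"
  proof
    show "A \<in> carrier_mat n n" by (rule A)
    show "unitary_eigenbasis n A U (\<lambda>j. eig A (Suc j))" by (rule U)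
    show "eig A (Suc j') \<le> eig A (Suc j)" if "j \<le> j'" "j' < n" for j j'
      using hermitian_eig_antimono[OF A h that] .
    show "unitary_eigenbasis (n - 1) (mat_delete A k k) (V k) (\<lambda>j. eig (principal_sub A (Suc k)) (Suc j))"
      if "k < n" for k
      using V that by blast
    show "eig (principal_sub A (Suc k)) (Suc j') \<le> eig (principal_sub A (Suc k)) (Suc j)"
      if "k < n" "j \<le> j'" "j' < n - 1" for k j j'
      using hermitian_eig_antimono[OF sub(1,2)[OF that(1)] that(2,3)] sub(3)[OF that(1)] by simp
  qed
  then show ?thesis by blast
qed

lemma sum_atLeastAtMost_Suc_shift: "(\<Sum>j = Suc a..b. f j) = (\<Sum>j\<in>{a..<b}. f (Suc j))"
  unfolding atLeastLessThanSuc_atLeastAtMost[symmetric] sum.atLeast_Suc_lessThan_Suc_shift comp_def ..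

theorem corollary3p6:
  fixes A :: "complex mat" and n l r :: nat
  assumes "A \<in> carrier_mat n n" and "hermitian A" and "n \<ge> 2"
    and "1 \<le> l" and "l \<le> r" and "r \<le> n - 1"
  shows "real (n - l) * eig A l + real (n - 1) * (\<Sum>j = l + 1..r. eig A j) + real r * eig A n
           \<le> (\<Sum>k = 1..n. \<Sum>j = l..r. eig (principal_sub A k) j)
       \<and> (\<Sum>k = 1..n. \<Sum>j = l..r. eig (principal_sub A k) j)
           \<le> real (n - l) * eig A 1 + real (n - 1) * (\<Sum>j = l + 1..r. eig A j) + real r * eig A (r + 1)"
proof -
  obtain U V where "principal_submatrix_spectra A n U (\<lambda>j. eig A (Suc j))
      V (\<lambda>k j. eig (principal_sub A (Suc k)) (Suc j))"
    using principal_submatrix_spectra_exists[OF assms(1,2)] by blast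
  then interpret principal_submatrix_spectra A n U "\<lambda>j. eig A (Suc j)"
    V "\<lambda>k j. eig (principal_sub A (Suc k)) (Suc j)" .
  obtain s where l: "l = Suc s" using assms(4) by (cases l) auto
  have r: "r < n" using assms(3,6) by simp
  have "(\<Sum>k = 1..n. \<Sum>j = l..r. eig (principal_sub A k) j) =
      (\<Sum>k<n. \<Sum>j\<in>{l - 1..<r}. eig (principal_sub A (Suc k)) (Suc j))"
    unfolding l One_nat_def sum_atLeastAtMost_Suc_shift atLeast0LessThan by simp
  moreover have "(\<Sum>j = l + 1..r. eig A j) = (\<Sum>j\<in>{l..<r}. eig A (Suc j))"
    using sum_atLeastAtMost_Suc_shift[where a = l and b = r and f = "eig A"] by simp
  moreover have "eig A l = eig A (Suc (l - 1))" and "eig A n = eig A (Suc (n - 1))"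
    using l assms(3) by simp_all
  ultimately show ?thesis
    using deleted_window_sum_bounds[OF assms(4,5) r] by simp
qed

end
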